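(* Let $r\geq 1$ and $d>r$ be integers and let $A_1,\dots,A_r$ be fixed positive integers. For each $i$ let $H^{(i)}$ be any one of the sequences (indexed by positive integers $n$) $A_i^{n}n!$, $A_i^{n}n!!$, $A_i^{n}[1,\dots,n]$, $A_i^{n}\,n\#$, or $A_i^{p_n}\,p_n\#$ (the choice may depend on $i$). Then the equation $$x^d=\prod_{i=1}^r H^{(i)}_{n_i}$$ has only finitely many solutions $(x,n_1,\dots,n_r)$ with $x\in\mathbb{Z}$ and $n_1,\dots,n_r$ positive integers.
   Context: $[1,\dots,n]$ is the least common multiple of $1,\dots,n$; $n!!$ is the double factorial; $n\#$ is the product of all primes $\leq n$; $p_n$ is the $n$-th prime and $p_n\#$ is the product of the first $n$ primes. *)

theory Defs
  imports Main "HOL-Computational_Algebra.Primes" "HOL-Library.Infinite_Set"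
begin

fun dfact :: "nat \<Rightarrow> nat" where
  "dfact 0 = 1"
| "dfact (Suc 0) = 1"
| "dfact (Suc (Suc n)) = Suc (Suc n) * dfact n"

definition lcm_upto :: "nat \<Rightarrow> nat" where
  "lcm_upto n = Lcm {1..n}"

definition primorial :: "nat \<Rightarrow> nat" where
  "primorial n = (\<Prod>p\<in>{p. prime p \<and> p \<le> n}. p)"

(* p_n = the n-th prime, 1-indexed: p_1 = 2 *)
definition nth_prime :: "nat \<Rightarrow> nat" where
  "nth_prime n = enumerate {p::nat. prime p} (n - 1)"

datatype seq_kind = Fact | DFact | LcmSeq | Primorial | PrimePrimorial

fun Hseq :: "seq_kind \<Rightarrow> nat \<Rightarrow> nat \<Rightarrow> nat" where
  "Hseq Fact A n = A ^ n * fact n"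
| "Hseq DFact A n = A ^ n * dfact n"
| "Hseq LcmSeq A n = A ^ n * lcm_upto n"
| "Hseq Primorial A n = A ^ n * primorial n"
| "Hseq PrimePrimorial A n = A ^ (nth_prime n) * primorial (nth_prime n)"

end

(*
  Let h be the "horizon" of n: n itself, except n/2 for even n in n!! and p_n for p_n#.
  An odd prime p not dividing A divides H_n = A^e * (n!, n!!, [1..n], n# or p_n#) exactly
  once if p <= h < 2p, and not at all if h < p. Let E be the largest horizon among
  n_1, ..., n_r. If E is large, Bertrand's postulate gives a prime p in (E/2, E] larger
  than every A_i; the p-adic valuation of the product then lies between 1 and r < d, so the
  product is no d-th power. Hence all n_i are bounded, and so is x. Bertrand's postulate
  for large n follows from Erdos' bounds on the central binomial coefficient.
*)
theory Submission
  imports Defs "HOL-Real_Asymp.Real_Asymp" "HOL-Library.Discrete_Functions"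
begin

section \<open>Legendre's formula and the central binomial coefficient\<close>

lemma multiplicity_le_self:
  fixes p m :: nat
  assumes "prime p" "0 < m"
  shows "multiplicity p m \<le> m"
proof -
  have "multiplicity p m < p ^ multiplicity p m"
    using prime_gt_1_nat[OF assms(1)] by (simp add: power_gt_expt)
  also have "\<dots> \<le> m"
    using assms(2) by (intro dvd_imp_le multiplicity_dvd)
  finally show ?thesis by simp
qed

lemma multiplicity_eq_card_prime_power_divisors:
  fixes p m N :: nat
  assumes "prime p" "0 < m" "multiplicity p m \<le> N"
  shows "multiplicity p m = card ({1..N} \<inter> {k. p ^ k dvd m})"
proof -
  have dvd_iff: "p ^ k dvd m \<longleftrightarrow> k \<le> multiplicity p m" for k
    using assms by (intro power_dvd_iff_le_multiplicity) auto
  have "{1..N} \<inter> {k. p ^ k dvd m} = {1..multiplicity p m}"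
    using assms(3) by (auto simp: dvd_iff)
  then show ?thesis by simp
qed

lemma multiplicity_fact:
  fixes p n N :: nat
  assumes "prime p" "n \<le> N"
  shows "multiplicity p (fact n :: nat) = (\<Sum>k\<in>{1..N}. n div p ^ k)"
  using assms(2)
proof (induction n)
  case 0
  show ?case by simp
next
  case (Suc n)
  have div_Suc_eq: "Suc n div p ^ k = of_bool (p ^ k dvd Suc n) + n div p ^ k" for k
    using prime_gt_0_nat[OF assms(1)] by (simp add: div_Suc dvd_eq_mod_eq_0)
  have "multiplicity p (fact (Suc n) :: nat) = multiplicity p (Suc n * fact n)"
    by (simp only: fact_Suc of_nat_id)
  also have "\<dots> = multiplicity p (Suc n) + multiplicity p (fact n :: nat)"
    using assms(1) by (intro prime_elem_multiplicity_mult_distrib) auto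
  also have "multiplicity p (Suc n) = card ({1..N} \<inter> {k. p ^ k dvd Suc n})"
    using multiplicity_le_self[OF assms(1), of "Suc n"] Suc.prems
    by (intro multiplicity_eq_card_prime_power_divisors[OF assms(1)]) auto
  also have "\<dots> = (\<Sum>k\<in>{1..N}. of_bool (p ^ k dvd Suc n))"
    by simp
  also have "multiplicity p (fact n :: nat) = (\<Sum>k\<in>{1..N}. n div p ^ k)"
    using Suc.prems by (intro Suc.IH) simp
  also have "(\<Sum>k\<in>{1..N}. of_bool (p ^ k dvd Suc n)) + (\<Sum>k\<in>{1..N}. n div p ^ k)
      = (\<Sum>k\<in>{1..N}. Suc n div p ^ k)"
    by (simp add: div_Suc_eq sum.distrib)
  finally show ?case .
qed

lemma div_double_bounds:
  fixes n q :: nat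
  shows "2 * (n div q) \<le> 2 * n div q" and "2 * n div q \<le> 2 * (n div q) + 1"
proof -
  have "2 * n div q = 2 * (n div q) + 2 * (n mod q) div q"
    by (rule div_mult1_eq)
  moreover have "2 * (n mod q) div q \<le> 1"
    using less_mult_imp_div_less[of "2 * (n mod q)" 2 q] by (cases "q = 0") auto
  ultimately show "2 * (n div q) \<le> 2 * n div q" and "2 * n div q \<le> 2 * (n div q) + 1"
    by simp_all
qed

lemma multiplicity_central_binomial:
  fixes p n :: nat
  assumes "prime p"
  shows "multiplicity p (2 * n choose n) = (\<Sum>k\<in>{1..2*n}. 2 * n div p ^ k - 2 * (n div p ^ k))"
proof -
  have "(fact (2 * n) :: nat) = fact n * fact n * (2 * n choose n)"
    using binomial_fact_lemma[of n "2 * n"] by simp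
  then have "multiplicity p (fact (2 * n) :: nat)
      = 2 * multiplicity p (fact n :: nat) + multiplicity p (2 * n choose n)"
    using assms by (simp add: prime_elem_multiplicity_mult_distrib)
  then have "multiplicity p (2 * n choose n)
      = (\<Sum>k\<in>{1..2*n}. 2 * n div p ^ k) - (\<Sum>k\<in>{1..2*n}. 2 * (n div p ^ k))"
    using multiplicity_fact[OF assms, of n "2 * n"] multiplicity_fact[OF assms, of "2 * n" "2 * n"]
    by (simp add: sum_distrib_left)
  also have "\<dots> = (\<Sum>k\<in>{1..2*n}. 2 * n div p ^ k - 2 * (n div p ^ k))"
    by (rule sum_subtractf_nat[symmetric]) (simp add: div_double_bounds(1))
  finally show ?thesis .
qed

lemma prime_power_multiplicity_central_binomial_le:
  fixes p n :: nat
  assumes "prime p" "0 < n"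
  shows "p ^ multiplicity p (2 * n choose n) \<le> 2 * n"
proof (rule ccontr)
  define v where "v = multiplicity p (2 * n choose n)"
  assume "\<not> p ^ multiplicity p (2 * n choose n) \<le> 2 * n"
  then have large: "2 * n < p ^ v"
    by (simp add: v_def)
  have "v = (\<Sum>k\<in>{1..2*n}. 2 * n div p ^ k - 2 * (n div p ^ k))"
    using multiplicity_central_binomial[OF assms(1)] by (simp add: v_def)
  also have "\<dots> \<le> (\<Sum>k\<in>{1..2*n}. of_bool (k < v))"
  proof (rule sum_mono)
    fix k
    show "2 * n div p ^ k - 2 * (n div p ^ k) \<le> of_bool (k < v)"
    proof (cases "k < v")
      case False
      then have "p ^ v \<le> p ^ k"
        using prime_gt_1_nat[OF assms(1)] by simp
      then show ?thesis
        using large by simp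
    qed (use div_double_bounds(2)[of n "p ^ k"] in simp)
  qed
  also have "\<dots> = card ({1..2*n} \<inter> {k. k < v})"
    by simp
  also have "\<dots> \<le> card {1..<v}"
    by (rule card_mono) auto
  also have "\<dots> < v"
    using large assms(2) by (cases v) auto
  finally show False
    by simp
qed

lemma multiplicity_central_binomial_large_prime:
  fixes p n :: nat
  assumes "prime p" "2 * n < p ^ 2"
  shows "multiplicity p (2 * n choose n) = 2 * n div p - 2 * (n div p)"
proof (cases "n = 0")
  case False
  have "(\<Sum>k\<in>{Suc 1..2*n}. 2 * n div p ^ k - 2 * (n div p ^ k)) = 0"
  proof (rule sum.neutral, rule ballI)
    fix k assume "k \<in> {Suc 1..2*n}"
    then have "p ^ 2 \<le> p ^ k"
      using prime_gt_1_nat[OF assms(1)] by (intro power_increasing) auto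
    then show "2 * n div p ^ k - 2 * (n div p ^ k) = 0"
      using assms(2) by simp
  qed
  then show ?thesis
    using False by (simp add: multiplicity_central_binomial[OF assms(1)] sum.atLeast_Suc_atMost)
qed simp

section \<open>Bertrand's postulate for large arguments\<close>

lemma primorial_Suc:
  "primorial (Suc n) = (if prime (Suc n) then Suc n * primorial n else primorial n)"
proof -
  have "{p. prime p \<and> p \<le> Suc n} =
      (if prime (Suc n) then insert (Suc n) {p. prime p \<and> p \<le> n} else {p. prime p \<and> p \<le> n})"
    by (auto simp: le_Suc_eq)
  then show ?thesis
    by (simp add: primorial_def)
qed

lemma primorial_0 [simp]: "primorial 0 = 1"
proof -
  have "{p::nat. prime p \<and> p \<le> 0} = {}"
    by auto
  then show ?thesis
    unfolding primorial_def by (simp only: prod.empty)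
qed

lemma primorial_pos: "0 < primorial n"
  by (auto simp: primorial_def prime_gt_0_nat)

lemma multiplicity_primorial:
  fixes p :: nat
  assumes "prime p"
  shows "multiplicity p (primorial n) = of_bool (p \<le> n)"
proof -
  have "multiplicity p (\<Prod>q\<in>{q. prime q \<and> q \<le> n}. q ^ 1) = (if p \<in> {q. prime q \<and> q \<le> n} then 1 else 0)"
    using assms by (intro multiplicity_prod_prime_powers) auto
  then show ?thesis
    using assms by (simp add: primorial_def)
qed

lemma central_binomial_odd_le: "2 * m + 1 choose m \<le> 4 ^ m"
proof -
  have "2 * (2 * m + 1 choose m) = (\<Sum>k\<in>{m, m + 1}. 2 * m + 1 choose k)"
    using binomial_symmetric[of m "2 * m + 1"] by simp
  also have "\<dots> \<le> (\<Sum>k\<le>2 * m + 1. 2 * m + 1 choose k)"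
    by (rule sum_mono2) auto
  also have "\<dots> = 2 ^ (2 * m + 1)"
    by (rule choose_row_sum)
  also have "\<dots> = 2 * 4 ^ m"
    by (simp add: power_mult)
  finally show ?thesis
    by simp
qed

lemma prime_dvd_central_binomial_odd:
  fixes p m :: nat
  assumes p: "prime p" and "m + 1 < p" "p \<le> 2 * m + 1"
  shows "p dvd (2 * m + 1 choose m)"
proof -
  have "p dvd (fact (2 * m + 1) :: nat)" and "\<not> p dvd (fact m :: nat)"
    and "\<not> p dvd (fact (m + 1) :: nat)"
    using assms(2,3) by (simp_all add: prime_dvd_fact_iff[OF p] del: fact_Suc)
  moreover have "fact (2 * m + 1) = fact m * fact (m + 1) * (2 * m + 1 choose m :: nat)"
    using binomial_fact_lemma[of m "2 * m + 1"] by (simp add: algebra_simps)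
  ultimately show ?thesis
    using p by (simp add: prime_dvd_mult_iff del: fact_Suc)
qed

lemma primorial_odd_dvd: "primorial (2 * m + 1) dvd primorial (m + 1) * (2 * m + 1 choose m)"
proof (rule multiplicity_le_imp_dvd)
  show "primorial (2 * m + 1) \<noteq> 0"
    using primorial_pos[of "2 * m + 1"] by simp
next
  fix p :: nat
  assume p: "prime p"
  define C where "C = 2 * m + 1 choose m"
  have "C \<noteq> 0"
    by (simp add: C_def)
  then have product: "multiplicity p (primorial (m + 1) * C) = of_bool (p \<le> m + 1) + multiplicity p C"
    using p primorial_pos[of "m + 1"]
    by (simp add: prime_elem_multiplicity_mult_distrib multiplicity_primorial)
  show "multiplicity p (primorial (2 * m + 1)) \<le> multiplicity p (primorial (m + 1) * C)"
  proof (cases "m + 1 < p \<and> p \<le> 2 * m + 1")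
    case True
    then have "0 < multiplicity p C"
      using prime_dvd_central_binomial_odd[OF p] p \<open>C \<noteq> 0\<close>
      by (simp add: C_def prime_multiplicity_gt_zero_iff)
    then show ?thesis
      unfolding product by (simp add: multiplicity_primorial[OF p])
  next
    case False
    then show ?thesis
      unfolding product multiplicity_primorial[OF p] by auto
  qed
qed
lemma primorial_le_four_pow: "primorial n \<le> 4 ^ n"
proof (induction n rule: less_induct)
  case (less n)
  consider "n \<le> 2" | "even n" "2 < n" | m where "n = 2 * m + 1" "0 < m"
    by (cases "n \<le> 2"; cases "even n") (auto elim!: oddE)
  then show ?case
  proof cases
    case 1
    have "primorial 1 = 1" and "primorial 2 = 2"
      using primorial_Suc[of 0] primorial_Suc[of 1] unfolding Suc_1 by simp_all
    moreover have "n = 0 \<or> n = 1 \<or> n = 2"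
      using 1 by auto
    ultimately show ?thesis
      by auto
  next
    case 2
    then obtain k where k: "n = Suc k"
      by (cases n) auto
    have "\<not> prime n"
      using 2 prime_odd_nat by blast
    then have "primorial n = primorial k"
      by (simp add: k primorial_Suc)
    also have "\<dots> \<le> 4 ^ k"
      using less.IH k by simp
    also have "\<dots> \<le> 4 ^ n"
      by (simp add: k)
    finally show ?thesis .
  next
    case (3 m)
    have "primorial n \<le> primorial (m + 1) * (2 * m + 1 choose m)"
      using primorial_odd_dvd[of m] 3 by (intro dvd_imp_le) (auto simp: primorial_pos)
    also have "\<dots> \<le> 4 ^ (m + 1) * 4 ^ m"
      using less.IH[of "m + 1"] central_binomial_odd_le[of m] 3 by (intro mult_le_mono) auto
    also have "\<dots> = 4 ^ n"
      by (simp add: 3 power_add[symmetric])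
    finally show ?thesis .
  qed
qed

lemma large_prime_factor_central_binomial:
  fixes p n :: nat
  assumes "prime p" "p dvd (2 * n choose n)" "2 * n < p ^ 2"
    and no_prime: "\<nexists>q. prime q \<and> n < q \<and> q \<le> 2 * n"
  shows "multiplicity p (2 * n choose n) = 1" and "3 * p \<le> 2 * n"
proof -
  have v: "multiplicity p (2 * n choose n) = 2 * n div p - 2 * (n div p)"
    using assms(1,3) by (rule multiplicity_central_binomial_large_prime)
  moreover have "0 < multiplicity p (2 * n choose n)"
    using assms(1,2) by (simp add: prime_multiplicity_gt_zero_iff)
  moreover have "2 * n div p \<le> 2 * (n div p) + 1"
    by (rule div_double_bounds(2))
  ultimately show v1: "multiplicity p (2 * n choose n) = 1"
    by linarith
  then have "p \<le> 2 * n"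
    using v by (cases "2 * n < p") auto
  then have "p \<le> n"
    using no_prime assms(1) not_le by blast
  show "3 * p \<le> 2 * n"
  proof (rule ccontr)
    assume "\<not> 3 * p \<le> 2 * n"
    then have "2 * n div p = 2" and "n div p = 1"
      using \<open>p \<le> n\<close> by (simp_all add: div_nat_eqI)
    then show False
      using v v1 by simp
  qed
qed

text \<open>Erdos' estimate: prime factors up to \<open>\<surd>(2n)\<close> contribute at most \<open>2n\<close> each;
  larger ones occur at most once and, for lack of primes in \<open>(n, 2n]\<close>, lie below \<open>2n/3\<close>.\<close>

lemma central_binomial_le_if_no_prime_between:
  fixes n :: nat
  assumes "0 < n" and no_prime: "\<nexists>p. prime p \<and> n < p \<and> p \<le> 2 * n"
  shows "2 * n choose n \<le> (2 * n) ^ floor_sqrt (2 * n) * 4 ^ (2 * n div 3)"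
proof -
  define C where "C = 2 * n choose n"
  define t where "t = floor_sqrt (2 * n)"
  define v where "v p = multiplicity p C" for p
  define Small where "Small = {p \<in> prime_factors C. p \<le> t}"
  define Large where "Large = {p \<in> prime_factors C. t < p}"
  have factor: "prime p" "p dvd C" if "p \<in> prime_factors C" for p
    using that by auto
  have small: "(\<Prod>p\<in>Small. p ^ v p) \<le> (2 * n) ^ t"
  proof -
    have "p ^ v p \<le> 2 * n" if "p \<in> Small" for p
      unfolding v_def C_def using factor(1) that assms(1)
      by (intro prime_power_multiplicity_central_binomial_le) (simp_all add: Small_def)
    moreover have "card Small \<le> card {1..t}"
      using factor(1) by (intro card_mono) (auto simp: Small_def Suc_le_eq prime_gt_0_nat)
    ultimately show ?thesis
      using assms(1) by (intro prod_le_power) simp_all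
  qed
  have large_factor: "v p = 1 \<and> p \<le> 2 * n div 3" if "p \<in> Large" for p
  proof -
    have p: "prime p" "p dvd 2 * n choose n"
      using that factor by (simp_all add: Large_def C_def)
    have "2 * n < (t + 1) ^ 2"
      unfolding t_def using Suc_floor_sqrt_power2_gt by simp
    also have "\<dots> \<le> p ^ 2"
      using that by (intro power_mono) (simp_all add: Large_def)
    finally have "2 * n < p ^ 2" .
    from large_prime_factor_central_binomial[OF p this no_prime] show ?thesis
      by (simp add: v_def C_def)
  qed
  have large: "(\<Prod>p\<in>Large. p ^ v p) \<le> 4 ^ (2 * n div 3)"
  proof -
    have "(\<Prod>p\<in>Large. p ^ v p) = (\<Prod>p\<in>Large. p)"
      using large_factor by (intro prod.cong) auto
    also have "\<dots> \<le> primorial (2 * n div 3)"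
      unfolding primorial_def using large_factor factor
      by (intro dvd_imp_le prod_dvd_prod_subset) (auto simp: Large_def prime_gt_0_nat)
    also have "\<dots> \<le> 4 ^ (2 * n div 3)"
      by (rule primorial_le_four_pow)
    finally show ?thesis .
  qed
  have "C = (\<Prod>p\<in>prime_factors C. p ^ v p)"
    using prod_prime_factors[of C] by (simp add: C_def v_def)
  also have "prime_factors C = Small \<union> Large"
    by (auto simp: Small_def Large_def)
  also have "(\<Prod>p\<in>Small \<union> Large. p ^ v p) = (\<Prod>p\<in>Small. p ^ v p) * (\<Prod>p\<in>Large. p ^ v p)"
    by (rule prod.union_disjoint) (auto simp: Small_def Large_def)
  also have "\<dots> \<le> (2 * n) ^ t * 4 ^ (2 * n div 3)"
    using small large by (rule mult_le_mono)
  finally show ?thesis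
    by (simp add: C_def t_def)
qed

lemma four_pow_le_if_no_prime_between:
  fixes n :: nat
  defines "x \<equiv> real n"
  assumes "0 < n" and "\<nexists>p. prime p \<and> n < p \<and> p \<le> 2 * n"
  shows "4 powr x \<le> 2 * x * ((2 * x) powr sqrt (2 * x) * 4 powr (2 * x / 3))"
proof -
  define t where "t = floor_sqrt (2 * n)"
  have x: "1 \<le> 2 * x"
    using assms(2) by (simp add: x_def)
  have "real (t ^ 2) \<le> real (2 * n)"
    using floor_sqrt_power2_le[of "2 * n"] unfolding t_def of_nat_le_iff .
  then have "real t \<le> sqrt (2 * x)"
    by (intro real_le_rsqrt) (simp add: x_def)
  have "(2 * x) ^ t = (2 * x) powr real t"
    using x by (intro powr_realpow[symmetric]) simp
  also have "\<dots> \<le> (2 * x) powr sqrt (2 * x)"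
    using \<open>real t \<le> sqrt (2 * x)\<close> x by (rule powr_mono)
  finally have sqrt_part: "(2 * x) ^ t \<le> (2 * x) powr sqrt (2 * x)" .
  have "real (2 * n div 3) \<le> 2 * x / 3"
    unfolding x_def using of_nat_div_le_of_nat[of "2 * n" 3] by simp
  then have "(4::real) powr real (2 * n div 3) \<le> 4 powr (2 * x / 3)"
    by (rule powr_mono) simp
  then have primorial_part: "(4::real) ^ (2 * n div 3) \<le> 4 powr (2 * x / 3)"
    by (simp add: powr_realpow)
  have "real (2 * n choose n) \<le> real ((2 * n) ^ t * 4 ^ (2 * n div 3))"
    unfolding of_nat_le_iff t_def using assms(2,3) by (rule central_binomial_le_if_no_prime_between)
  also have "\<dots> = (2 * x) ^ t * 4 ^ (2 * n div 3)"
    by (simp add: x_def)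
  also have "\<dots> \<le> (2 * x) powr sqrt (2 * x) * 4 powr (2 * x / 3)"
    using sqrt_part primorial_part by (intro mult_mono) simp_all
  finally have binomial_le: "real (2 * n choose n) \<le> (2 * x) powr sqrt (2 * x) * 4 powr (2 * x / 3)" .
  have "4 powr x = 4 ^ n"
    by (simp add: x_def powr_realpow)
  also have "\<dots> \<le> 2 * x * real (2 * n choose n)"
    using central_binomial_lower_bound[OF assms(2)] assms(2)
    by (simp add: x_def pos_divide_le_eq mult_ac)
  also have "\<dots> \<le> 2 * x * ((2 * x) powr sqrt (2 * x) * 4 powr (2 * x / 3))"
    using binomial_le x by (intro mult_left_mono) simp_all
  finally show ?thesis .
qed

lemma bertrand_eventually: "eventually (\<lambda>n. \<exists>p. prime p \<and> n < p \<and> p \<le> 2 * n) sequentially"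
proof -
  have "eventually (\<lambda>n::nat. 2 * real n * ((2 * real n) powr sqrt (2 * real n) * 4 powr (2 * real n / 3))
      < 4 powr real n) sequentially"
    by real_asymp
  moreover have "eventually (\<lambda>n::nat. 0 < n) sequentially"
    by (rule eventually_gt_at_top)
  ultimately show ?thesis
  proof eventually_elim
    case (elim n)
    show ?case
    proof (rule ccontr)
      assume "\<not> ?case"
      with elim(2) have "4 powr real n \<le> 2 * real n * ((2 * real n) powr sqrt (2 * real n) * 4 powr (2 * real n / 3))"
        by (rule four_pow_le_if_no_prime_between)
      with elim(1) show False
        by linarith
    qed
  qed
qed

section \<open>Large primes in the sequences\<close>

lemma multiplicity_fact_below_double:
  fixes p n :: nat
  assumes "prime p" "n < 2 * p"
  shows "multiplicity p (fact n :: nat) = of_bool (p \<le> n)"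
proof -
  have "multiplicity p (fact n :: nat) = (\<Sum>k\<in>{1..Suc n}. n div p ^ k)"
    by (rule multiplicity_fact[OF assms(1)]) simp
  also have "\<dots> = n div p + (\<Sum>k\<in>{2..Suc n}. n div p ^ k)"
    by (simp add: sum.atLeast_Suc_atMost numeral_2_eq_2)
  also have "(\<Sum>k\<in>{2..Suc n}. n div p ^ k) = 0"
  proof (rule sum.neutral, rule ballI)
    fix k
    assume "k \<in> {2..Suc n}"
    then have "p ^ 2 \<le> p ^ k"
      using prime_gt_0_nat[OF assms(1)] by (intro power_increasing) auto
    moreover have "2 * p \<le> p ^ 2"
      using prime_ge_2_nat[OF assms(1)] by (simp add: power2_eq_square)
    ultimately show "n div p ^ k = 0"
      using assms(2) by simp
  qed
  also have "n div p = of_bool (p \<le> n)"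
    using assms(2) by (auto intro: div_nat_eqI)
  finally show ?thesis
    by simp
qed

lemma multiplicity_dvd_fact_below_double:
  fixes p x n :: nat
  assumes "prime p" "n < 2 * p" "x dvd fact n" "p \<le> n \<Longrightarrow> p dvd x"
  shows "multiplicity p x = of_bool (p \<le> n)"
proof -
  have "x \<noteq> 0"
  proof
    assume "x = 0"
    with assms(3) show False
      by simp
  qed
  have "multiplicity p x \<le> multiplicity p (fact n :: nat)"
    using assms(3) by (rule dvd_imp_multiplicity_le) simp
  moreover have "0 < multiplicity p x" if "p \<le> n"
    using assms(1,4) that \<open>x \<noteq> 0\<close> by (simp add: prime_multiplicity_gt_zero_iff)
  ultimately show ?thesis
    using multiplicity_fact_below_double[OF assms(1,2)] by (cases "p \<le> n") auto
qed

lemma dfact_pos: "0 < dfact n"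
  by (induction n rule: dfact.induct) simp_all

lemma dfact_dvd_fact: "dfact n dvd fact n"
proof (induction n rule: dfact.induct)
  case (3 n)
  have "dfact (Suc (Suc n)) = Suc (Suc n) * dfact n"
    by simp
  also have "\<dots> dvd Suc (Suc n) * (Suc n * fact n)"
    using 3 by (intro mult_dvd_mono dvd_mult) simp_all
  also have "\<dots> = fact (Suc (Suc n))"
    by (simp only: fact_Suc of_nat_id)
  finally show ?case .
qed simp_all

lemma dfact_double: "dfact (2 * k) = 2 ^ k * fact k"
  by (induction k) (simp_all add: fact_Suc algebra_simps del: of_nat_Suc)

lemma odd_dvd_dfact:
  assumes "odd p" "odd n" "p \<le> n"
  shows "p dvd dfact n"
  using assms
proof (induction n rule: dfact.induct)
  case (3 n)
  show ?case
  proof (cases "p = Suc (Suc n)")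
    case True
    then show ?thesis
      by (simp only: dfact.simps(3) dvd_triv_left)
  next
    case False
    with 3 have "p \<le> n"
      by (auto simp: le_Suc_eq)
    with 3 show ?thesis
      by simp
  qed
qed (auto simp: le_Suc_eq)

lemma lcm_upto_dvd_fact: "lcm_upto n dvd fact n"
  unfolding lcm_upto_def by (rule Lcm_least) (auto intro: dvd_fact)

lemma dvd_lcm_upto: "1 \<le> m \<Longrightarrow> m \<le> n \<Longrightarrow> m dvd lcm_upto n"
  unfolding lcm_upto_def by (rule dvd_Lcm) simp

definition core :: "seq_kind \<Rightarrow> nat \<Rightarrow> nat" where
  "core k n = (case k of Fact \<Rightarrow> fact n | DFact \<Rightarrow> dfact n | LcmSeq \<Rightarrow> lcm_upto n
     | Primorial \<Rightarrow> primorial n | PrimePrimorial \<Rightarrow> primorial (nth_prime n))"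

text \<open>For a prime \<open>p > 2\<close> with \<open>horizon k n < 2p\<close>, the valuation of \<open>core k n\<close> at \<open>p\<close> is
  1 if \<open>p \<le> horizon k n\<close> and 0 otherwise; for even \<open>n\<close> the horizon of \<open>n!!\<close> is \<open>n/2\<close>
  because \<open>(2m)!! = 2\<^sup>m m!\<close>.\<close>

definition horizon :: "seq_kind \<Rightarrow> nat \<Rightarrow> nat" where
  "horizon k n = (case k of DFact \<Rightarrow> if odd n then n else n div 2
     | PrimePrimorial \<Rightarrow> nth_prime n | _ \<Rightarrow> n)"

lemma Hseq_eq_power_times_core:
  obtains e where "Hseq k A n = A ^ e * core k n"
  by (cases k) (auto simp: core_def)

lemma core_pos: "0 < core k n"
proof -
  have "0 < lcm_upto n"
    using lcm_upto_dvd_fact[of n] by (metis dvd_0_left_iff fact_nonzero gr0I)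
  then show ?thesis
    by (cases k) (simp_all add: core_def dfact_pos primorial_pos)
qed

lemma Hseq_pos: "0 < A \<Longrightarrow> 0 < Hseq k A n"
  by (metis Hseq_eq_power_times_core core_pos nat_0_less_mult_iff zero_less_power)

lemma le_double_horizon: "n \<le> 2 * horizon k n + 1"
proof (cases k)
  case PrimePrimorial
  have "n - 1 \<le> nth_prime n"
    unfolding nth_prime_def using primes_infinite by (rule le_enumerate)
  then show ?thesis
    using PrimePrimorial by (simp add: horizon_def)
qed (auto simp: horizon_def)

lemma multiplicity_dfact_double:
  fixes p :: nat
  assumes "prime p" "p \<noteq> 2"
  shows "multiplicity p (dfact (2 * j)) = multiplicity p (fact j :: nat)"
proof -
  have "\<not> p dvd 2 ^ j"
  proof
    assume "p dvd 2 ^ j"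
    then have "p dvd 2"
      using assms(1) prime_dvd_power by blast
    then show False
      using assms primes_dvd_imp_eq two_is_prime_nat by blast
  qed
  then show ?thesis
    using assms(1) by (simp add: dfact_double multiplicity_prime_elem_times_other)
qed

lemma multiplicity_core:
  fixes p :: nat
  assumes "prime p" "2 < p" "horizon k n < 2 * p"
  shows "multiplicity p (core k n) = of_bool (p \<le> horizon k n)"
proof (cases k)
  case DFact
  show ?thesis
  proof (cases "even n")
    case True
    then obtain j where "n = 2 * j"
      by blast
    then show ?thesis
      using DFact assms by (simp add: core_def horizon_def multiplicity_dfact_double multiplicity_fact_below_double)
  next
    case False
    have "odd p"
      using assms prime_odd_nat by blast
    with False DFact assms show ?thesis
      by (simp add: core_def horizon_def multiplicity_dvd_fact_below_double dfact_dvd_fact odd_dvd_dfact)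
  qed
next
  case LcmSeq
  then show ?thesis
    using assms prime_ge_1_nat[OF assms(1)]
    by (simp add: core_def horizon_def multiplicity_dvd_fact_below_double lcm_upto_dvd_fact dvd_lcm_upto)
qed (use assms in \<open>simp_all add: core_def horizon_def multiplicity_fact_below_double multiplicity_primorial\<close>)

lemma multiplicity_Hseq:
  fixes p A :: nat
  assumes "prime p" "2 < p" "\<not> p dvd A" "horizon k n < 2 * p"
  shows "multiplicity p (Hseq k A n) = of_bool (p \<le> horizon k n)"
proof -
  obtain e where e: "Hseq k A n = A ^ e * core k n"
    by (rule Hseq_eq_power_times_core)
  have "\<not> p dvd A ^ e"
    using assms(1,3) prime_dvd_power by blast
  then show ?thesis
    using assms by (simp add: e multiplicity_prime_elem_times_other multiplicity_core)
qed

lemma finite_int_roots: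
  fixes c :: int
  assumes "0 < d"
  shows "finite {x. x ^ d = c}"
proof (rule finite_subset)
  show "{x. x ^ d = c} \<subseteq> {-\<bar>c\<bar>..\<bar>c\<bar>}"
  proof
    fix x
    assume "x \<in> {x. x ^ d = c}"
    then have "\<bar>x\<bar> ^ d = \<bar>c\<bar>"
      by (simp flip: power_abs)
    moreover have "\<bar>x\<bar> \<le> \<bar>x\<bar> ^ d"
      using assms by (cases "x = 0") (simp_all add: self_le_power)
    ultimately show "x \<in> {-\<bar>c\<bar>..\<bar>c\<bar>}"
      by auto
  qed
qed simp

lemma multiplicity_prod_Hseq:
  fixes p :: nat and A n :: "nat \<Rightarrow> nat" and K :: "nat \<Rightarrow> seq_kind"
  assumes "prime p" "2 < p"
    and "\<And>j. j < r \<Longrightarrow> \<not> p dvd A j" "\<And>j. j < r \<Longrightarrow> horizon (K j) (n j) < 2 * p"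
  shows "multiplicity p (\<Prod>j<r. Hseq (K j) (A j) (n j)) = card {j \<in> {..<r}. p \<le> horizon (K j) (n j)}"
proof -
  have "0 < A j" if "j < r" for j
    using assms(3)[OF that] by (rule contrapos_np) simp
  then have "multiplicity p (\<Prod>j<r. Hseq (K j) (A j) (n j)) = (\<Sum>j<r. multiplicity p (Hseq (K j) (A j) (n j)))"
    using assms(1) Hseq_pos by (intro prime_elem_multiplicity_prod_distrib) (auto simp: less_not_refl2)
  also have "\<dots> = (\<Sum>j<r. of_bool (p \<le> horizon (K j) (n j)))"
    using assms by (intro sum.cong) (simp_all add: multiplicity_Hseq)
  also have "\<dots> = card {j \<in> {..<r}. p \<le> horizon (K j) (n j)}"
    by (simp add: Int_def)
  finally show ?thesis .
qed

lemma exponent_le_multiplicity_power: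
  fixes p y :: nat
  assumes "prime p" "0 < multiplicity p (y ^ d)"
  shows "d \<le> multiplicity p (y ^ d)"
proof (cases "y = 0")
  case False
  then show ?thesis
    using assms by (simp add: prime_elem_multiplicity_power_distrib)
qed (use assms in \<open>cases d; simp\<close>)

lemma horizon_bounded_if_perfect_power:
  fixes A :: "nat \<Rightarrow> nat" and K :: "nat \<Rightarrow> seq_kind"
  assumes "r < d" and "\<forall>i<r. 0 < A i"
  obtains N where "\<And>y n i. y ^ d = (\<Prod>j<r. Hseq (K j) (A j) (n j)) \<Longrightarrow> i < r \<Longrightarrow> horizon (K i) (n i) < N"
proof -
  obtain N0 where N0: "\<And>m::nat. N0 \<le> m \<Longrightarrow> \<exists>p. prime p \<and> m < p \<and> p \<le> 2 * m"
    using bertrand_eventually by (auto simp: eventually_sequentially)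
  \<comment> \<open>a maximal horizon \<open>E \<ge> N\<close> has a prime \<open>p \<in> (E/2, E]\<close> with \<open>p > A j\<close> and \<open>p > 2\<close>\<close>
  define N where "N = 2 * (N0 + (\<Sum>j<r. A j) + 2)"
  have "horizon (K i) (n i) < N"
    if power: "y ^ d = (\<Prod>j<r. Hseq (K j) (A j) (n j))" and "i < r" for y n i
  proof (rule ccontr)
    define E where "E = Max ((\<lambda>j. horizon (K j) (n j)) ` {..<r})"
    have le_E: "horizon (K j) (n j) \<le> E" if "j < r" for j
      using that by (simp add: E_def)
    have "E \<in> (\<lambda>j. horizon (K j) (n j)) ` {..<r}"
      unfolding E_def using \<open>i < r\<close> by (intro Max_in) auto
    then obtain j0 where j0: "j0 < r" "horizon (K j0) (n j0) = E"
      by auto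
    assume "\<not> horizon (K i) (n i) < N"
    with le_E[OF \<open>i < r\<close>] have m: "N0 + (\<Sum>j<r. A j) + 2 \<le> E div 2" "2 * (E div 2) \<le> E" "E < 2 * (E div 2) + 2"
      unfolding N_def by presburger+
    then obtain p where p: "prime p" "E div 2 < p" "p \<le> 2 * (E div 2)"
      using N0[of "E div 2"] by auto
    have "\<not> p dvd A j" if "j < r" for j
      using that member_le_sum[of j "{..<r}" A] dvd_imp_le[of p "A j"] assms(2) p m by auto
    moreover have "horizon (K j) (n j) < 2 * p" if "j < r" for j
      using le_E[OF that] p m by linarith
    ultimately have count: "multiplicity p (y ^ d) = card {j \<in> {..<r}. p \<le> horizon (K j) (n j)}"
      unfolding power using p m by (intro multiplicity_prod_Hseq) auto
    moreover have "0 < card {j \<in> {..<r}. p \<le> horizon (K j) (n j)}"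
      using j0 p m by (auto simp: card_gt_0_iff)
    moreover have "card {j \<in> {..<r}. p \<le> horizon (K j) (n j)} \<le> r"
      using card_mono[of "{..<r}" "{j \<in> {..<r}. p \<le> horizon (K j) (n j)}"] by auto
    ultimately show False
      using exponent_le_multiplicity_power[OF p(1), of y d] \<open>r < d\<close> by linarith
  qed
  then show ?thesis
    by (rule that)
qed

lemma nat_abs_power_eq:
  fixes x :: int
  assumes "x ^ d = int m"
  shows "nat \<bar>x\<bar> ^ d = m"
proof -
  have "int (nat \<bar>x\<bar> ^ d) = \<bar>x ^ d\<bar>"
    by (simp add: power_abs)
  also have "\<dots> = int m"
    by (simp add: assms)
  finally show ?thesis
    by (simp only: of_nat_eq_iff)
qed

theorem theorem6:
  fixes r d :: nat and A :: "nat \<Rightarrow> nat" and K :: "nat \<Rightarrow> seq_kind"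
  assumes "r \<ge> 1" and "d > r" and "\<forall>i<r. A i > 0"
  shows "finite {(x::int, ns::nat list). length ns = r \<and> (\<forall>i<r. ns ! i > 0) \<and>
           x ^ d = (\<Prod>i<r. int (Hseq (K i) (A i) (ns ! i)))}"
proof -
  obtain N where N: "\<And>y n i. y ^ d = (\<Prod>j<r. Hseq (K j) (A j) (n j)) \<Longrightarrow> i < r \<Longrightarrow> horizon (K i) (n i) < N"
    using horizon_bounded_if_perfect_power assms(2,3) by blast
  define P where "P ns = (\<Prod>i<r. int (Hseq (K i) (A i) (ns ! i)))" for ns
  define NS where "NS = {ns. set ns \<subseteq> {..2 * N} \<and> length ns = r}"
  have solution: "(x, ns) \<in> (\<Union>ns\<in>NS. {x. x ^ d = P ns} \<times> {ns})"
    if "length ns = r" and "x ^ d = P ns" for x ns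
  proof -
    have "nat \<bar>x\<bar> ^ d = (\<Prod>j<r. Hseq (K j) (A j) (ns ! j))"
      using that(2) by (intro nat_abs_power_eq) (simp add: P_def)
    then have "ns ! i \<le> 2 * N" if "i < r" for i
      using N[of "nat \<bar>x\<bar>" "\<lambda>j. ns ! j" i] le_double_horizon[of "ns ! i" "K i"] that by simp
    then show ?thesis
      using that by (auto simp: NS_def in_set_conv_nth)
  qed
  then have "{(x, ns). length ns = r \<and> (\<forall>i<r. ns ! i > 0) \<and> x ^ d = P ns}
      \<subseteq> (\<Union>ns\<in>NS. {x. x ^ d = P ns} \<times> {ns})"
    by blast
  moreover have "finite (\<Union>ns\<in>NS. {x. x ^ d = P ns} \<times> {ns})"
    using assms(2) finite_lists_length_eq[of "{..2 * N}" r] finite_int_roots by (simp add: NS_def)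
  ultimately show ?thesis
    unfolding P_def by (rule finite_subset)
qed

end
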